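(* Let $\mathcal{X}$ and $\mathcal{Y}$ be finite sets and let $p(X,Y)$ be a fully supported probability distribution on $\mathcal{X}\times\mathcal{Y}$ (i.e. $p(x,y)>0$ for all $(x,y)$), with conditional $p(Y|X)$ and marginals $p(X)$, $p(Y)$, and assume that $p(Y)(y)=\sum_x p(y|x)p(x)$ is the uniform distribution on $\mathcal{Y}$. Let $\kappa\in C(\mathcal{X}\times\mathcal{Y},\mathcal{T})$ be a solution of the Intertwining Information Bottleneck (IIB) problem with parameter $\lambda=I(X;Y)$. Then for any pair of bijections $\sigma:\mathcal{X}\to\mathcal{X}$, $\tau:\mathcal{Y}\to\mathcal{Y}$, the pair $(\sigma,\tau)$ is an equivariance of $p(Y|X)$ if and only if $$\kappa\circ(\sigma\otimes\tau)=\kappa,\quad\text{i.e. }\ \kappa(t\mid \sigma(x),\tau(y))=\kappa(t\mid x,y)\ \text{ for all } (x,y,t)\in\mathcal{X}\times\mathcal{Y}\times\mathcal{T}.$$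
   Context: $\mathcal{T}:=\mathbb{N}$. For finite or countable sets $\mathcal{A},\mathcal{B}$, $C(\mathcal{A},\mathcal{B})$ denotes the set of channels (conditional probabilities) $\kappa(b|a)$ from $\mathcal{A}$ to $\mathcal{B}$; deterministic maps are viewed as deterministic channels and $\circ$ is channel composition. For a distribution $r$ on $\mathcal{X}\times\mathcal{Y}$ and $\kappa\in C(\mathcal{X}\times\mathcal{Y},\mathcal{T})$, $\kappa(r)$ is the distribution $t\mapsto\sum_{x,y}\kappa(t|x,y)r(x,y)$. $I_\kappa(X,Y;T)$ is the mutual information between $(X,Y)$ and $T$ under the joint distribution $p(x,y)\kappa(t|x,y)$, $D(\cdot\|\cdot)$ is the Kullback–Leibler divergence, and $I(X;Y)=D(p(X,Y)\|p(X)p(Y))$. For $0\le\lambda\le I(X;Y)$, the IIB problem is: minimise $I_\kappa(X,Y;T)$ over $\kappa\in C(\mathcal{X}\times\mathcal{Y},\mathcal{T})$ subject to $D(\kappa(p(X,Y))\,\|\,\kappa(p(X)p(Y)))=\lambda$; a solution is a minimiser. An (exact) equivariance of $p(Y|X)$ is a pair of bijections $(\sigma,\tau)$ of $\mathcal{X}$ and $\mathcal{Y}$ with $p(Y|X)\circ\sigma=\tau\circ p(Y|X)$ as channels, i.e. $p(y\mid\sigma(x))=p(\tau^{-1}(y)\mid x)$ for all $x,y$. *)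

theory Defs
  imports "HOL-Analysis.Analysis"
begin

text \<open>Channels from a finite alphabet 'a to the countable alphabet T = nat:
  kappa a t = kappa(t|a), nonnegative and summing to 1 over t.\<close>
definition channel :: "('a \<Rightarrow> nat \<Rightarrow> real) \<Rightarrow> bool" where
  "channel \<kappa> \<longleftrightarrow> (\<forall>a t. 0 \<le> \<kappa> a t) \<and> (\<forall>a. (\<kappa> a has_sum 1) UNIV)"

definition push :: "('a::finite \<Rightarrow> nat \<Rightarrow> real) \<Rightarrow> ('a \<Rightarrow> real) \<Rightarrow> nat \<Rightarrow> real" where
  "push \<kappa> r t = (\<Sum>a\<in>UNIV. \<kappa> a t * r a)"

definition KL :: "('a \<Rightarrow> real) \<Rightarrow> ('a \<Rightarrow> real) \<Rightarrow> real" where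
  "KL q r = infsum (\<lambda>a. if q a = 0 then 0 else q a * ln (q a / r a)) UNIV"

definition margA :: "('a \<times> 'b \<Rightarrow> real) \<Rightarrow> 'a \<Rightarrow> real" where
  "margA j a = infsum (\<lambda>b. j (a, b)) UNIV"

definition margB :: "('a \<times> 'b \<Rightarrow> real) \<Rightarrow> 'b \<Rightarrow> real" where
  "margB j b = infsum (\<lambda>a. j (a, b)) UNIV"

definition prod_marg :: "('a \<times> 'b \<Rightarrow> real) \<Rightarrow> 'a \<times> 'b \<Rightarrow> real" where
  "prod_marg j = (\<lambda>(a, b). margA j a * margB j b)"

definition mutual_info :: "('a \<times> 'b \<Rightarrow> real) \<Rightarrow> real" where
  "mutual_info j = KL j (prod_marg j)"

definition joint :: "('a \<Rightarrow> real) \<Rightarrow> ('a \<Rightarrow> nat \<Rightarrow> real) \<Rightarrow> 'a \<times> nat \<Rightarrow> real" where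
  "joint r \<kappa> = (\<lambda>(a, t). r a * \<kappa> a t)"

definition MI_channel :: "('x \<times> 'y \<Rightarrow> real) \<Rightarrow> ('x \<times> 'y \<Rightarrow> nat \<Rightarrow> real) \<Rightarrow> real" where
  "MI_channel p \<kappa> = mutual_info (joint p \<kappa>)"

definition IIB_feasible ::
  "('x::finite \<times> 'y::finite \<Rightarrow> real) \<Rightarrow> real \<Rightarrow> ('x \<times> 'y \<Rightarrow> nat \<Rightarrow> real) \<Rightarrow> bool" where
  "IIB_feasible p lam \<kappa> \<longleftrightarrow> channel \<kappa> \<and> KL (push \<kappa> p) (push \<kappa> (prod_marg p)) = lam"

definition IIB_solution ::
  "('x::finite \<times> 'y::finite \<Rightarrow> real) \<Rightarrow> real \<Rightarrow> ('x \<times> 'y \<Rightarrow> nat \<Rightarrow> real) \<Rightarrow> bool" where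
  "IIB_solution p lam \<kappa> \<longleftrightarrow> IIB_feasible p lam \<kappa> \<and>
     (\<forall>\<kappa>'. IIB_feasible p lam \<kappa>' \<longrightarrow> MI_channel p \<kappa> \<le> MI_channel p \<kappa>')"

definition cond :: "('x \<times> 'y \<Rightarrow> real) \<Rightarrow> 'x \<Rightarrow> 'y \<Rightarrow> real" where
  "cond p x y = p (x, y) / margA p x"

definition equivariance :: "('x \<times> 'y \<Rightarrow> real) \<Rightarrow> ('x \<Rightarrow> 'x) \<Rightarrow> ('y \<Rightarrow> 'y) \<Rightarrow> bool" where
  "equivariance p \<sigma> \<tau> \<longleftrightarrow> bij \<sigma> \<and> bij \<tau> \<and>
     (\<forall>x y. cond p (\<sigma> x) y = cond p x (inv \<tau> y))"

end

theory Submission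
  imports Defs
begin

(* Write q = p(X)p(Y) and r = p / q.  Since p(Y) is uniform, r(x,y) = |Y| p(y|x), so (sigma,tau)
   is an equivariance iff r is invariant under sigma x tau.  With lambda = I(X;Y) = D(p || q) the
   IIB constraint is the equality case of data processing, D(kappa p || kappa q) <= D(p || q),
   which forces r(a) = kappa p(t) / kappa q(t) whenever kappa(t|a) > 0; as every row of kappa has
   a positive entry, invariance of kappa gives invariance of r.  Conversely, averaging kappa with
   weights p over the level sets of r leaves kappa p and kappa q unchanged, so the average is
   feasible, and lowers I(X,Y;T) unless kappa is already constant on those level sets; hence a
   solution depends on (x,y) only through r.  Both defects are sums of the nonnegative integrand
   u ln(u/v) - u + v of the generalised Kullback-Leibler divergence. *)

lemma has_sum_sum:
  fixes f :: "'i \<Rightarrow> 'a \<Rightarrow> 'b::topological_comm_monoid_add"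
  assumes "finite I" "\<And>i. i \<in> I \<Longrightarrow> (f i has_sum s i) A"
  shows "((\<lambda>x. \<Sum>i\<in>I. f i x) has_sum (\<Sum>i\<in>I. s i)) A"
  using assms by (induction I rule: finite_induct) (auto intro: has_sum_add)

lemma has_sum_diff:
  fixes f g :: "'a \<Rightarrow> 'b::topological_ab_group_add"
  assumes "(f has_sum a) A" "(g has_sum b) A"
  shows "((\<lambda>x. f x - g x) has_sum (a - b)) A"
  using has_sum_add[OF assms(1), of "\<lambda>x. - g x" "- b"] assms(2) by (simp add: has_sum_uminus)

lemma has_sum_sum_nonneg_le_0D:
  fixes f :: "'a::finite \<Rightarrow> 'b \<Rightarrow> real"
  assumes "((\<lambda>t. \<Sum>a\<in>UNIV. f a t) has_sum s) UNIV" "s \<le> 0" "\<And>a t. 0 \<le> f a t"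
  shows "f a t = 0"
proof -
  have "(\<Sum>a\<in>UNIV. f a t) = 0"
    by (rule nonneg_has_sum_le_0D[OF assms(1,2)]) (auto intro: sum_nonneg assms(3))
  then show ?thesis using assms(3) by (simp add: sum_nonneg_eq_0_iff)
qed

lemma has_sum_prod_finite_fst:
  fixes F :: "'a::finite \<times> 'b \<Rightarrow> 'c::topological_comm_monoid_add"
  assumes "\<And>a. ((\<lambda>b. F (a, b)) has_sum S a) UNIV"
  shows "(F has_sum (\<Sum>a\<in>UNIV. S a)) UNIV"
proof -
  have "(F has_sum S a) ({a} \<times> UNIV)" for a
  proof -
    have "(F has_sum S a) (Pair a ` UNIV) \<longleftrightarrow> ((F \<circ> Pair a) has_sum S a) UNIV"
      by (rule has_sum_reindex) (auto simp: inj_on_def)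
    moreover have "Pair a ` UNIV = {a} \<times> (UNIV :: 'b set)" by auto
    ultimately show ?thesis using assms[of a] by (simp add: o_def)
  qed
  then have "(F has_sum (\<Sum>a\<in>UNIV. S a)) (\<Union>a\<in>UNIV. {a} \<times> UNIV)"
    by (intro sum_has_sum) auto
  moreover have "(\<Union>a. {a} \<times> UNIV) = (UNIV :: ('a \<times> 'b) set)" by auto
  ultimately show ?thesis by simp
qed

definition gen_kl :: "real \<Rightarrow> real \<Rightarrow> real" where
  "gen_kl u v = u * ln (u / v) - u + v"

lemma gen_kl_eq_pos:
  assumes "0 < u" "0 < v"
  shows "gen_kl u v = u * (v / u - 1 - ln (v / u))"
  using assms by (simp add: gen_kl_def ln_div field_simps)

lemma gen_kl_nonneg:
  assumes "0 \<le> u" "0 \<le> v" "0 < u \<Longrightarrow> 0 < v"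
  shows "0 \<le> gen_kl u v"
proof (cases "u = 0")
  case True
  then show ?thesis using assms by (simp add: gen_kl_def)
next
  case False
  with assms have "0 < u" "0 < v" by auto
  then show ?thesis using ln_le_minus_one[of "v / u"] by (simp add: gen_kl_eq_pos)
qed

lemma gen_kl_eq_0_iff:
  assumes "0 \<le> u" "0 \<le> v" "0 < u \<Longrightarrow> 0 < v"
  shows "gen_kl u v = 0 \<longleftrightarrow> u = v"
proof
  assume gen_kl_0: "gen_kl u v = 0"
  show "u = v"
  proof (cases "u = 0")
    case True
    then show ?thesis using gen_kl_0 by (simp add: gen_kl_def)
  next
    case False
    with assms have "0 < u" "0 < v" by auto
    with gen_kl_0 have "ln (v / u) = v / u - 1" by (simp add: gen_kl_eq_pos)
    with ln_eq_minus_one[of "v / u"] \<open>0 < u\<close> \<open>0 < v\<close> show ?thesis by simp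
  qed
qed (simp add: gen_kl_def)

lemma abs_mult_ln_div_le:
  fixes u v c :: real
  assumes "0 \<le> u" "0 \<le> v" "u \<le> c * v"
  shows "\<bar>u * ln (u / v)\<bar> \<le> c * u + v"
proof (cases "u = 0")
  case True
  then show ?thesis using assms by simp
next
  case False
  with assms(1) have u: "0 < u" by simp
  with assms(3) have "0 < c * v" by simp
  with assms(2) have v: "0 < v" and c: "0 < c" by (auto simp: zero_less_mult_iff)
  have "u * ln (u / v) \<le> u * (u / v - 1)"
    using ln_le_minus_one[of "u / v"] u v by (intro mult_left_mono) auto
  also have "\<dots> \<le> u * c"
  proof -
    have "u / v \<le> c" using assms(3) v by (simp add: divide_le_eq)
    then show ?thesis using u by (intro mult_left_mono) auto
  qed
  finally have upper: "u * ln (u / v) \<le> c * u" by (simp add: mult.commute)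
  have "u - v = u * (1 - v / u)" using u by (simp add: field_simps)
  also have "\<dots> \<le> u * ln (u / v)"
    using ln_le_minus_one[of "v / u"] u v by (intro mult_left_mono) (auto simp: ln_div)
  finally have lower: "u - v \<le> u * ln (u / v)" .
  have "0 \<le> c * u" using c u by simp
  then show ?thesis unfolding abs_le_iff using upper lower u v by linarith
qed

lemma summable_on_mult_ln_div:
  fixes f g :: "'a \<Rightarrow> real"
  assumes "f summable_on A" "g summable_on A"
    and "\<And>x. x \<in> A \<Longrightarrow> 0 \<le> f x" "\<And>x. x \<in> A \<Longrightarrow> 0 \<le> g x" "\<And>x. x \<in> A \<Longrightarrow> f x \<le> c * g x"
  shows "(\<lambda>x. f x * ln (f x / g x)) summable_on A"
proof -
  have "(\<lambda>x. c * f x + g x) summable_on A"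
    using assms(1,2) by (intro summable_on_add summable_on_cmult_right)
  then have "(\<lambda>x. norm (f x * ln (f x / g x))) summable_on A"
    by (rule Infinite_Sum.abs_summable_on_comparison_test') (use assms abs_mult_ln_div_le in auto)
  then show ?thesis using summable_on_iff_abs_summable_on_real by blast
qed

lemma KL_eq_infsum: "KL q r = infsum (\<lambda>a. q a * ln (q a / r a)) UNIV"
  unfolding KL_def by (rule infsum_cong) simp

lemma channel_nonneg: "channel \<kappa> \<Longrightarrow> 0 \<le> \<kappa> a t"
  unfolding channel_def by auto

lemma channel_has_sum: "channel \<kappa> \<Longrightarrow> (\<kappa> a has_sum 1) UNIV"
  unfolding channel_def by auto

lemma channel_ex_pos:
  assumes "channel \<kappa>"
  shows "\<exists>t. 0 < \<kappa> a t"
proof (rule ccontr)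
  assume "\<nexists>t. 0 < \<kappa> a t"
  then have "\<kappa> a = (\<lambda>_. 0)" using channel_nonneg[OF assms, of a] by (auto simp: not_less order.antisym)
  then show False using channel_has_sum[OF assms, of a] has_sum_unique[OF _ has_sum_0_simp] by fastforce
qed

lemma mult_le_push:
  fixes r :: "'a::finite \<Rightarrow> real"
  assumes "channel \<kappa>" "\<And>a. 0 \<le> r a"
  shows "\<kappa> a t * r a \<le> push \<kappa> r t"
  unfolding push_def
  by (rule member_le_sum) (use assms in \<open>auto intro: mult_nonneg_nonneg channel_nonneg\<close>)

lemma push_nonneg:
  fixes r :: "'a::finite \<Rightarrow> real"
  assumes "channel \<kappa>" "\<And>a. 0 \<le> r a"
  shows "0 \<le> push \<kappa> r t"
  unfolding push_def by (intro sum_nonneg mult_nonneg_nonneg channel_nonneg[OF assms(1)] assms(2))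

lemma has_sum_push:
  fixes r :: "'a::finite \<Rightarrow> real"
  assumes "channel \<kappa>"
  shows "(push \<kappa> r has_sum (\<Sum>a\<in>UNIV. r a)) UNIV"
proof -
  have "((\<lambda>t. \<Sum>a\<in>UNIV. \<kappa> a t * r a) has_sum (\<Sum>a\<in>UNIV. 1 * r a)) UNIV"
    by (intro has_sum_sum has_sum_cmult_left channel_has_sum assms) simp
  then show ?thesis unfolding push_def by simp
qed

lemma prod_marg_joint:
  fixes r :: "'a::finite \<Rightarrow> real"
  assumes "channel \<kappa>"
  shows "prod_marg (joint r \<kappa>) (a, t) = r a * push \<kappa> r t"
proof -
  have "((\<lambda>t. r a * \<kappa> a t) has_sum (r a * 1)) UNIV"
    by (intro has_sum_cmult_right channel_has_sum assms)
  then have "margA (joint r \<kappa>) a = r a" unfolding margA_def joint_def by (simp add: infsumI)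
  moreover have "margB (joint r \<kappa>) t = push \<kappa> r t"
    unfolding margB_def joint_def push_def by (simp add: mult.commute)
  ultimately show ?thesis unfolding prod_marg_def by simp
qed

lemma has_sum_mutual_info_joint:
  fixes p :: "'a::finite \<Rightarrow> real"
  assumes p: "\<And>a. 0 \<le> p a" and ch: "channel \<kappa>"
  shows "((\<lambda>t. \<Sum>a\<in>UNIV. p a * \<kappa> a t * ln (\<kappa> a t / push \<kappa> p t))
           has_sum mutual_info (joint p \<kappa>)) UNIV"
proof -
  define G where "G a t = p a * \<kappa> a t * ln (\<kappa> a t / push \<kappa> p t)" for a t
  have row: "(G a has_sum infsum (G a) UNIV) UNIV" for a
  proof (cases "p a = 0")
    case True
    then have "G a = (\<lambda>_. 0)" by (simp add: G_def fun_eq_iff)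
    then show ?thesis by simp
  next
    case False
    with p have "0 < p a" by (simp add: order_less_le)
    have "(\<lambda>t. \<kappa> a t * ln (\<kappa> a t / push \<kappa> p t)) summable_on UNIV"
    proof (rule summable_on_mult_ln_div[where c = "1 / p a"])
      show "\<kappa> a t \<le> 1 / p a * push \<kappa> p t" for t
        using mult_le_push[of \<kappa> p a t] ch p \<open>0 < p a\<close> by (simp add: field_simps)
    qed (auto intro: has_sum_imp_summable channel_has_sum[OF ch] has_sum_push[OF ch]
                     channel_nonneg[OF ch] push_nonneg[OF ch p])
    then have "G a summable_on UNIV"
      unfolding G_def mult.assoc by (rule summable_on_cmult_right)
    then show ?thesis by (simp add: summable_iff_has_sum_infsum)
  qed
  have "joint p \<kappa> (a, t) * ln (joint p \<kappa> (a, t) / prod_marg (joint p \<kappa>) (a, t)) = G a t" for a t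
    unfolding prod_marg_joint[OF ch] by (cases "p a = 0") (simp_all add: G_def joint_def)
  then have "mutual_info (joint p \<kappa>) = infsum (\<lambda>(a, t). G a t) UNIV"
    unfolding mutual_info_def KL_eq_infsum by (metis (no_types, lifting) case_prod_beta' prod.collapse)
  also have "\<dots> = (\<Sum>a\<in>UNIV. infsum (G a) UNIV)"
    by (rule infsumI, rule has_sum_prod_finite_fst) (simp add: row)
  finally show ?thesis
    using has_sum_sum[OF finite_class.finite_UNIV row] by (simp add: G_def)
qed

definition fiber_mean :: "('a \<Rightarrow> 'b) \<Rightarrow> ('a \<Rightarrow> real) \<Rightarrow> ('a \<Rightarrow> real) \<Rightarrow> 'b \<Rightarrow> real" where
  "fiber_mean g w k v = (\<Sum>b | g b = v. w b * k b) / (\<Sum>b | g b = v. w b)"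

definition fiber_mean_channel ::
  "('a \<Rightarrow> 'b) \<Rightarrow> ('a \<Rightarrow> real) \<Rightarrow> ('a \<Rightarrow> nat \<Rightarrow> real) \<Rightarrow> 'a \<Rightarrow> nat \<Rightarrow> real" where
  "fiber_mean_channel g w \<kappa> a t = fiber_mean g w (\<lambda>b. \<kappa> b t) (g a)"

lemma sum_mult_fiber_mean:
  fixes w k :: "'a::finite \<Rightarrow> real"
  assumes w: "\<And>a. 0 \<le> w a"
  shows "(\<Sum>a\<in>UNIV. w a * fiber_mean g w k (g a) * \<psi> (g a)) = (\<Sum>a\<in>UNIV. w a * k a * \<psi> (g a))"
proof -
  have fiber: "(\<Sum>a | g a = v. w a * fiber_mean g w k v * \<psi> v) = (\<Sum>a | g a = v. w a * k a * \<psi> v)" for v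
  proof (cases "(\<Sum>a | g a = v. w a) = 0")
    case True
    then have "w a = 0" if "g a = v" for a
      using sum_nonneg_eq_0_iff[of "{a. g a = v}" w] w that by auto
    then show ?thesis by simp
  next
    case False
    have "(\<Sum>a | g a = v. w a * fiber_mean g w k v * \<psi> v) = (\<Sum>a | g a = v. w a) * fiber_mean g w k v * \<psi> v"
      by (simp add: sum_distrib_right)
    also have "\<dots> = (\<Sum>a | g a = v. w a * k a) * \<psi> v"
      using False by (simp add: fiber_mean_def)
    finally show ?thesis by (simp add: sum_distrib_right)
  qed
  have "(\<Sum>a\<in>UNIV. w a * fiber_mean g w k (g a) * \<psi> (g a))
      = (\<Sum>v\<in>range g. \<Sum>a | g a = v. w a * fiber_mean g w k v * \<psi> v)"
    by (subst sum.group[symmetric, of UNIV "range g" g]) (auto intro!: sum.cong)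
  also have "\<dots> = (\<Sum>v\<in>range g. \<Sum>a | g a = v. w a * k a * \<psi> v)"
    by (simp add: fiber)
  also have "\<dots> = (\<Sum>a\<in>UNIV. w a * k a * \<psi> (g a))"
    by (subst sum.group[symmetric, of UNIV "range g" g]) (auto intro!: sum.cong)
  finally show ?thesis .
qed

lemma fiber_weight_pos:
  fixes w :: "'a::finite \<Rightarrow> real"
  assumes "\<And>a. 0 < w a"
  shows "0 < (\<Sum>b | g b = g a. w b)"
  by (rule sum_pos2[of _ a]) (use assms in \<open>auto intro: less_imp_le\<close>)

lemma fiber_mean_nonneg:
  fixes w k :: "'a::finite \<Rightarrow> real"
  assumes "\<And>a. 0 \<le> w a" "\<And>a. 0 \<le> k a"
  shows "0 \<le> fiber_mean g w k v"
  unfolding fiber_mean_def using assms by (auto intro!: divide_nonneg_nonneg sum_nonneg)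

lemma fiber_mean_pos:
  fixes w k :: "'a::finite \<Rightarrow> real"
  assumes w: "\<And>a. 0 < w a" and k: "\<And>a. 0 \<le> k a" "0 < k a"
  shows "0 < fiber_mean g w k (g a)"
proof -
  have "0 < (\<Sum>b | g b = g a. w b * k b)"
    by (rule sum_pos2[of _ a]) (use w k in \<open>auto intro: mult_nonneg_nonneg less_imp_le\<close>)
  then show ?thesis unfolding fiber_mean_def using fiber_weight_pos[of w g a, OF w] by simp
qed

lemma channel_fiber_mean_channel:
  fixes w :: "'a::finite \<Rightarrow> real"
  assumes w: "\<And>a. 0 < w a" and ch: "channel \<kappa>"
  shows "channel (fiber_mean_channel g w \<kappa>)"
  unfolding channel_def
proof (intro conjI allI)
  fix a t
  show "0 \<le> fiber_mean_channel g w \<kappa> a t"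
    unfolding fiber_mean_channel_def
    using w channel_nonneg[OF ch] by (intro fiber_mean_nonneg) (auto intro: less_imp_le)
next
  fix a
  let ?F = "{b. g b = g a}"
  have "((\<lambda>t. \<Sum>b\<in>?F. w b * \<kappa> b t) has_sum (\<Sum>b\<in>?F. w b * 1)) UNIV"
    by (intro has_sum_sum has_sum_cmult_right channel_has_sum ch) simp
  then have "((\<lambda>t. (\<Sum>b\<in>?F. w b * \<kappa> b t) / (\<Sum>b\<in>?F. w b))
      has_sum (\<Sum>b\<in>?F. w b * 1) / (\<Sum>b\<in>?F. w b)) UNIV"
    by (rule has_sum_divide_const)
  then have "((\<lambda>t. (\<Sum>b\<in>?F. w b * \<kappa> b t) / (\<Sum>b\<in>?F. w b)) has_sum 1) UNIV"
    using fiber_weight_pos[of w g a, OF w] by simp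
  moreover have "fiber_mean_channel g w \<kappa> a = (\<lambda>t. (\<Sum>b\<in>?F. w b * \<kappa> b t) / (\<Sum>b\<in>?F. w b))"
    by (simp add: fun_eq_iff fiber_mean_channel_def fiber_mean_def)
  ultimately show "(fiber_mean_channel g w \<kappa> a has_sum 1) UNIV" by simp
qed

lemma push_fiber_mean_channel:
  fixes w :: "'a::finite \<Rightarrow> real"
  assumes "\<And>a. 0 \<le> w a"
  shows "push (fiber_mean_channel g w \<kappa>) (\<lambda>a. w a * \<psi> (g a)) = push \<kappa> (\<lambda>a. w a * \<psi> (g a))"
proof
  fix t
  show "push (fiber_mean_channel g w \<kappa>) (\<lambda>a. w a * \<psi> (g a)) t = push \<kappa> (\<lambda>a. w a * \<psi> (g a)) t"
    using sum_mult_fiber_mean[where w = w and k = "\<lambda>b. \<kappa> b t" and g = g and \<psi> = \<psi>, OF assms]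
    by (simp add: push_def fiber_mean_channel_def ac_simps)
qed

lemma has_sum_mutual_info_fiber_mean_defect:
  fixes w :: "'a::finite \<Rightarrow> real" and g :: "'a \<Rightarrow> 'b"
  assumes w: "\<And>a. 0 < w a" and ch: "channel \<kappa>"
  defines "\<kappa>' \<equiv> fiber_mean_channel g w \<kappa>"
  shows "((\<lambda>t. \<Sum>a\<in>UNIV. w a * gen_kl (\<kappa> a t) (\<kappa>' a t))
           has_sum mutual_info (joint w \<kappa>) - mutual_info (joint w \<kappa>')) UNIV"
proof -
  have w0: "0 \<le> w a" for a using w[of a] by simp
  have ch': "channel \<kappa>'" unfolding \<kappa>'_def by (rule channel_fiber_mean_channel[OF w ch])
  have "push \<kappa>' (\<lambda>a. w a * 1) = push \<kappa> (\<lambda>a. w a * 1)"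
    unfolding \<kappa>'_def by (rule push_fiber_mean_channel[OF w0])
  then have push_eq: "push \<kappa>' w = push \<kappa> w" by simp
  define m where "m = push \<kappa> w"
  have \<kappa>'_pos: "0 < \<kappa>' a t" if "0 < \<kappa> a t" for a t
    unfolding \<kappa>'_def fiber_mean_channel_def
    by (rule fiber_mean_pos[OF w]) (use channel_nonneg[OF ch] that in auto)
  have m_pos: "0 < m t" if "0 < \<kappa> a t" for a t
  proof -
    have "0 < \<kappa> a t * w a" using that w[of a] by simp
    also have "\<dots> \<le> m t" using mult_le_push[of \<kappa> w a t] ch w0 by (simp add: m_def)
    finally show ?thesis .
  qed
  have pointwise: "(\<Sum>a\<in>UNIV. w a * \<kappa> a t * ln (\<kappa> a t / m t))
      - (\<Sum>a\<in>UNIV. w a * \<kappa>' a t * ln (\<kappa>' a t / m t))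
      = (\<Sum>a\<in>UNIV. w a * gen_kl (\<kappa> a t) (\<kappa>' a t))" for t
  proof -
    have tower_ln: "(\<Sum>a\<in>UNIV. w a * \<kappa>' a t * ln (\<kappa>' a t / m t))
        = (\<Sum>a\<in>UNIV. w a * \<kappa> a t * ln (\<kappa>' a t / m t))"
      using sum_mult_fiber_mean[where w = w and k = "\<lambda>b. \<kappa> b t" and g = g
          and \<psi> = "\<lambda>v. ln (fiber_mean g w (\<lambda>b. \<kappa> b t) v / m t)", OF w0]
      by (simp add: \<kappa>'_def fiber_mean_channel_def)
    have tower_1: "(\<Sum>a\<in>UNIV. w a * \<kappa>' a t) = (\<Sum>a\<in>UNIV. w a * \<kappa> a t)"
      using sum_mult_fiber_mean[where w = w and k = "\<lambda>b. \<kappa> b t" and g = g and \<psi> = "\<lambda>_. 1", OF w0]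
      by (simp add: \<kappa>'_def fiber_mean_channel_def)
    have term_eq: "w a * \<kappa> a t * ln (\<kappa> a t / m t) - w a * \<kappa> a t * ln (\<kappa>' a t / m t)
        = w a * gen_kl (\<kappa> a t) (\<kappa>' a t) + w a * \<kappa> a t - w a * \<kappa>' a t" for a
    proof (cases "\<kappa> a t = 0")
      case True
      then show ?thesis by (simp add: gen_kl_def)
    next
      case False
      then have "0 < \<kappa> a t" using channel_nonneg[OF ch, of a t] by simp
      then have "ln (\<kappa> a t / m t) - ln (\<kappa>' a t / m t) = ln (\<kappa> a t / \<kappa>' a t)"
        using \<kappa>'_pos[OF \<open>0 < \<kappa> a t\<close>] m_pos[OF \<open>0 < \<kappa> a t\<close>] by (simp add: ln_div)
      then have "w a * \<kappa> a t * ln (\<kappa> a t / m t) - w a * \<kappa> a t * ln (\<kappa>' a t / m t)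
          = w a * (\<kappa> a t * ln (\<kappa> a t / \<kappa>' a t))"
        by (metis mult.assoc right_diff_distrib)
      then show ?thesis by (simp add: gen_kl_def algebra_simps)
    qed
    have "(\<Sum>a\<in>UNIV. w a * \<kappa> a t * ln (\<kappa> a t / m t))
        - (\<Sum>a\<in>UNIV. w a * \<kappa>' a t * ln (\<kappa>' a t / m t))
        = (\<Sum>a\<in>UNIV. w a * \<kappa> a t * ln (\<kappa> a t / m t) - w a * \<kappa> a t * ln (\<kappa>' a t / m t))"
      unfolding tower_ln by (simp add: sum_subtractf)
    also have "\<dots> = (\<Sum>a\<in>UNIV. w a * gen_kl (\<kappa> a t) (\<kappa>' a t) + w a * \<kappa> a t - w a * \<kappa>' a t)"
      by (simp only: term_eq)
    also have "\<dots> = (\<Sum>a\<in>UNIV. w a * gen_kl (\<kappa> a t) (\<kappa>' a t))"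
      using tower_1 by (simp add: sum.distrib sum_subtractf)
    finally show ?thesis .
  qed
  show ?thesis
    using has_sum_diff[OF has_sum_mutual_info_joint[where p = w, OF w0 ch]
        has_sum_mutual_info_joint[where p = w, OF w0 ch']]
    unfolding push_eq m_def[symmetric] pointwise .
qed

lemma min_mutual_info_imp_fiber_const:
  fixes p q :: "'a::finite \<Rightarrow> real"
  assumes p: "\<And>a. 0 < p a" and q: "\<And>a. 0 < q a" and ch: "channel \<kappa>"
    and min: "\<And>\<kappa>'. channel \<kappa>' \<Longrightarrow> push \<kappa>' p = push \<kappa> p \<Longrightarrow> push \<kappa>' q = push \<kappa> q \<Longrightarrow>
                mutual_info (joint p \<kappa>) \<le> mutual_info (joint p \<kappa>')"
    and ratio: "p a / q a = p b / q b"
  shows "\<kappa> a t = \<kappa> b t"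
proof -
  define r where "r a = p a / q a" for a
  define \<kappa>' where "\<kappa>' = fiber_mean_channel r p \<kappa>"
  have p0: "0 \<le> p a" for a using p[of a] by simp
  have ch': "channel \<kappa>'" unfolding \<kappa>'_def by (rule channel_fiber_mean_channel[OF p ch])
  have "push \<kappa>' (\<lambda>a. p a * 1) = push \<kappa> (\<lambda>a. p a * 1)"
    and "push \<kappa>' (\<lambda>a. p a * inverse (r a)) = push \<kappa> (\<lambda>a. p a * inverse (r a))"
    unfolding \<kappa>'_def by (rule push_fiber_mean_channel[OF p0])+
  moreover have "(\<lambda>a. p a * inverse (r a)) = q"
  proof
    show "p a * inverse (r a) = q a" for a using p[of a] by (simp add: r_def)
  qed
  ultimately have "mutual_info (joint p \<kappa>) \<le> mutual_info (joint p \<kappa>')"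
    by (intro min ch') simp_all
  moreover have "((\<lambda>t. \<Sum>a\<in>UNIV. p a * gen_kl (\<kappa> a t) (\<kappa>' a t)) has_sum
      mutual_info (joint p \<kappa>) - mutual_info (joint p \<kappa>')) UNIV"
    unfolding \<kappa>'_def by (rule has_sum_mutual_info_fiber_mean_defect[OF p ch])
  moreover have gen_kl_hyps: "0 \<le> \<kappa> c t" "0 \<le> \<kappa>' c t" "0 < \<kappa> c t \<Longrightarrow> 0 < \<kappa>' c t" for c t
    using channel_nonneg[OF ch] channel_nonneg[OF ch'] unfolding \<kappa>'_def fiber_mean_channel_def
    by (auto intro: fiber_mean_pos[OF p])
  ultimately have defect_0: "p c * gen_kl (\<kappa> c t) (\<kappa>' c t) = 0" for c t
    by (intro has_sum_sum_nonneg_le_0D[where s = "mutual_info (joint p \<kappa>) - mutual_info (joint p \<kappa>')"])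
       (auto intro: mult_nonneg_nonneg p0 gen_kl_nonneg gen_kl_hyps)
  have fixed: "\<kappa> c t = \<kappa>' c t" for c
    using defect_0[of c t] p[of c] gen_kl_eq_0_iff[of "\<kappa> c t" "\<kappa>' c t"] gen_kl_hyps[of c t] by simp
  have "\<kappa>' a t = \<kappa>' b t"
    using ratio by (simp add: \<kappa>'_def fiber_mean_channel_def r_def)
  then show ?thesis by (simp add: fixed)
qed

lemma sum_mult_gen_kl_push:
  fixes p q :: "'a::finite \<Rightarrow> real"
  assumes p: "\<And>a. 0 < p a" and q: "\<And>a. 0 < q a" and ch: "channel \<kappa>"
  shows "(\<Sum>a\<in>UNIV. \<kappa> a t * gen_kl (p a) (q a * push \<kappa> p t / push \<kappa> q t))
       = (\<Sum>a\<in>UNIV. \<kappa> a t * (p a * ln (p a / q a))) - push \<kappa> p t * ln (push \<kappa> p t / push \<kappa> q t)"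
proof (cases "push \<kappa> p t = 0")
  case True
  have p0: "0 \<le> p a" for a using p[of a] by simp
  have "\<kappa> a t = 0" for a
    using mult_le_push[of \<kappa> p a t] ch p0 p[of a] channel_nonneg[OF ch, of a t] True
    by (simp add: mult_le_0_iff)
  then show ?thesis using True by simp
next
  case False
  let ?P = "push \<kappa> p t" and ?Q = "push \<kappa> q t"
  have "0 \<le> ?P" by (rule push_nonneg[OF ch]) (simp add: less_imp_le p)
  with False have P: "0 < ?P" by simp
  obtain a0 where "\<kappa> a0 t * p a0 \<noteq> 0"
    using False unfolding push_def by (rule sum.not_neutral_contains_not_neutral)
  then have "0 < \<kappa> a0 t * q a0"
    using channel_nonneg[OF ch, of a0 t] q[of a0] by simp
  also have "\<dots> \<le> ?Q" by (rule mult_le_push[OF ch]) (simp add: less_imp_le q)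
  finally have Q: "0 < ?Q" .
  have term_eq: "\<kappa> a t * gen_kl (p a) (q a * ?P / ?Q)
      = \<kappa> a t * (p a * ln (p a / q a)) - \<kappa> a t * p a * ln (?P / ?Q) - \<kappa> a t * p a
        + \<kappa> a t * q a * (?P / ?Q)" for a
  proof -
    have ln_eq: "ln (p a / (q a * ?P / ?Q)) = ln (p a / q a) - ln (?P / ?Q)"
      using p[of a] q[of a] P Q by (simp add: ln_div ln_mult)
    show ?thesis unfolding gen_kl_def ln_eq by (simp add: algebra_simps)
  qed
  have sum_P: "(\<Sum>a\<in>UNIV. \<kappa> a t * p a) = ?P" and sum_Q: "(\<Sum>a\<in>UNIV. \<kappa> a t * q a) = ?Q"
    by (simp_all add: push_def)
  have "(\<Sum>a\<in>UNIV. \<kappa> a t * gen_kl (p a) (q a * ?P / ?Q))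
      = (\<Sum>a\<in>UNIV. \<kappa> a t * (p a * ln (p a / q a))) - ?P * ln (?P / ?Q) - ?P + ?Q * (?P / ?Q)"
    unfolding term_eq sum_subtractf sum.distrib by (simp only: sum_distrib_right[symmetric] sum_P sum_Q)
  then show ?thesis using Q by simp
qed

lemma has_sum_KL_push_defect:
  fixes p q :: "'a::finite \<Rightarrow> real"
  assumes p: "\<And>a. 0 < p a" and q: "\<And>a. 0 < q a" and ch: "channel \<kappa>"
  shows "((\<lambda>t. \<Sum>a\<in>UNIV. \<kappa> a t * gen_kl (p a) (q a * push \<kappa> p t / push \<kappa> q t))
           has_sum KL p q - KL (push \<kappa> p) (push \<kappa> q)) UNIV"
proof -
  let ?P = "push \<kappa> p" and ?Q = "push \<kappa> q"
  have p0: "0 \<le> p a" and q0: "0 \<le> q a" for a using p[of a] q[of a] by simp_all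
  define R where "R = (\<Sum>a\<in>UNIV. p a / q a)"
  have "p a \<le> R * q a" for a
  proof -
    have "p a / q a \<le> R" unfolding R_def
      by (rule member_le_sum) (simp_all add: p0 q0)
    then show ?thesis using q[of a] by (simp add: divide_le_eq)
  qed
  then have P_le: "?P t \<le> R * ?Q t" for t
    unfolding push_def sum_distrib_left
    by (intro sum_mono) (metis channel_nonneg[OF ch] mult.left_commute mult_left_mono)
  have "((\<lambda>t. \<Sum>a\<in>UNIV. \<kappa> a t * (p a * ln (p a / q a))) has_sum (\<Sum>a\<in>UNIV. 1 * (p a * ln (p a / q a)))) UNIV"
    by (intro has_sum_sum has_sum_cmult_left channel_has_sum ch) simp
  then have KL_p_q: "((\<lambda>t. \<Sum>a\<in>UNIV. \<kappa> a t * (p a * ln (p a / q a))) has_sum KL p q) UNIV"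
    by (simp add: KL_eq_infsum)
  have KL_P_Q: "((\<lambda>t. ?P t * ln (?P t / ?Q t)) has_sum KL ?P ?Q) UNIV"
  proof -
    have "(\<lambda>t. ?P t * ln (?P t / ?Q t)) summable_on UNIV"
      by (rule summable_on_mult_ln_div[where c = R])
         (auto intro: has_sum_imp_summable has_sum_push[OF ch] push_nonneg[OF ch] p0 q0 P_le)
    then show ?thesis by (simp add: KL_eq_infsum summable_iff_has_sum_infsum)
  qed
  show ?thesis
    unfolding sum_mult_gen_kl_push[OF p q ch] by (rule has_sum_diff[OF KL_p_q KL_P_Q])
qed

lemma KL_push_eq_imp_ratio_eq:
  fixes p q :: "'a::finite \<Rightarrow> real"
  assumes p: "\<And>a. 0 < p a" and q: "\<And>a. 0 < q a" and ch: "channel \<kappa>"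
    and KL_eq: "KL (push \<kappa> p) (push \<kappa> q) = KL p q" and pos: "0 < \<kappa> a t"
  shows "p a / q a = push \<kappa> p t / push \<kappa> q t"
proof -
  let ?v = "\<lambda>a t. q a * push \<kappa> p t / push \<kappa> q t"
  have v_pos: "0 < ?v a t" if "0 < \<kappa> a t" for a t
  proof -
    have "0 < \<kappa> a t * p a" "0 < \<kappa> a t * q a" using that p[of a] q[of a] by simp_all
    moreover have "\<kappa> a t * p a \<le> push \<kappa> p t" "\<kappa> a t * q a \<le> push \<kappa> q t"
      using mult_le_push[of \<kappa> p a t] mult_le_push[of \<kappa> q a t] ch p q by (simp_all add: less_imp_le)
    ultimately show ?thesis using q[of a] by simp
  qed
  have defect_0: "\<kappa> c s * gen_kl (p c) (?v c s) = 0" for c s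
  proof (rule has_sum_sum_nonneg_le_0D[OF has_sum_KL_push_defect[OF p q ch]])
    show "KL p q - KL (push \<kappa> p) (push \<kappa> q) \<le> 0" using KL_eq by simp
    show "0 \<le> \<kappa> c s * gen_kl (p c) (?v c s)" for c s
    proof (cases "\<kappa> c s = 0")
      case False
      then have "0 < \<kappa> c s" using channel_nonneg[OF ch, of c s] by simp
      then show ?thesis
        using p[of c] v_pos[of c s] by (intro mult_nonneg_nonneg gen_kl_nonneg) auto
    qed simp
  qed
  have "gen_kl (p a) (?v a t) = 0" using defect_0[of a t] pos by simp
  then have "p a = ?v a t"
    using gen_kl_eq_0_iff[of "p a" "?v a t"] p[of a] v_pos[OF pos] by simp
  then show ?thesis using q[of a] by (simp add: field_simps)
qed

lemma prod_marg_pos: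
  fixes p :: "'x::finite \<times> 'y::finite \<Rightarrow> real"
  assumes "\<And>a. 0 < p a"
  shows "0 < prod_marg p a"
proof -
  obtain x y where a: "a = (x, y)" by (cases a)
  have "0 < margA p x" "0 < margB p y"
    unfolding margA_def margB_def infsum_finite[OF finite_class.finite_UNIV]
    by (intro sum_pos; simp add: assms)+
  then show ?thesis unfolding a prod_marg_def by simp
qed

lemma ratio_prod_marg_uniform:
  fixes p :: "'x \<times> 'y::finite \<Rightarrow> real"
  assumes "\<And>y. margB p y = 1 / real CARD('y)"
  shows "p (x, y) / prod_marg p (x, y) = real CARD('y) * cond p x y"
  using assms by (simp add: prod_marg_def cond_def)

lemma equivariance_iff:
  assumes "bij \<sigma>" "bij \<tau>"
  shows "equivariance p \<sigma> \<tau> \<longleftrightarrow> (\<forall>x y. cond p (\<sigma> x) (\<tau> y) = cond p x y)"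
  unfolding equivariance_def
  using assms by (metis bij_inv_eq_iff)

theorem theorem2:
  fixes p :: "'x::finite \<times> 'y::finite \<Rightarrow> real"
    and \<kappa> :: "'x \<times> 'y \<Rightarrow> nat \<Rightarrow> real"
    and \<sigma> :: "'x \<Rightarrow> 'x" and \<tau> :: "'y \<Rightarrow> 'y"
  assumes pos: "\<forall>a. p a > 0"
    and prob: "(\<Sum>a\<in>UNIV. p a) = 1"
    and unifY: "\<forall>y. margB p y = 1 / real CARD('y)"
    and sol: "IIB_solution p (mutual_info p) \<kappa>"
    and bij: "bij \<sigma>" "bij \<tau>"
  shows "equivariance p \<sigma> \<tau> \<longleftrightarrow> (\<forall>x y t. \<kappa> (\<sigma> x, \<tau> y) t = \<kappa> (x, y) t)"
proof -
  define q where "q = prod_marg p"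
  have p: "\<And>a. 0 < p a" using pos by blast
  have q: "\<And>a. 0 < q a" unfolding q_def by (rule prod_marg_pos[OF p])
  have ratio: "p (x, y) / q (x, y) = real CARD('y) * cond p x y" for x y
    unfolding q_def using unifY by (simp add: ratio_prod_marg_uniform)
  have ch: "channel \<kappa>" and KL_eq: "KL (push \<kappa> p) (push \<kappa> q) = KL p q"
    using sol unfolding IIB_solution_def IIB_feasible_def mutual_info_def q_def by auto
  have min: "mutual_info (joint p \<kappa>) \<le> mutual_info (joint p \<kappa>')"
    if "channel \<kappa>'" "push \<kappa>' p = push \<kappa> p" "push \<kappa>' q = push \<kappa> q" for \<kappa>'
    using sol that KL_eq
    unfolding IIB_solution_def IIB_feasible_def MI_channel_def q_def mutual_info_def[of p] by auto
  have fiber_const: "\<kappa> a t = \<kappa> b t" if "p a / q a = p b / q b" for a b t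
    by (rule min_mutual_info_imp_fiber_const[OF p q ch _ that]) (use min in blast)
  note ratio_eq = KL_push_eq_imp_ratio_eq[OF p q ch KL_eq]
  show ?thesis
    unfolding equivariance_iff[OF bij]
  proof safe
    fix x y t
    assume "\<forall>x y. cond p (\<sigma> x) (\<tau> y) = cond p x y"
    then have "p (\<sigma> x, \<tau> y) / q (\<sigma> x, \<tau> y) = p (x, y) / q (x, y)"
      unfolding ratio by simp
    then show "\<kappa> (\<sigma> x, \<tau> y) t = \<kappa> (x, y) t" by (rule fiber_const)
  next
    fix x y
    assume inv: "\<forall>x y t. \<kappa> (\<sigma> x, \<tau> y) t = \<kappa> (x, y) t"
    obtain t where t: "0 < \<kappa> (x, y) t" using channel_ex_pos[OF ch] by blast
    have "p (\<sigma> x, \<tau> y) / q (\<sigma> x, \<tau> y) = p (x, y) / q (x, y)"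
      using ratio_eq[of "(x, y)" t] ratio_eq[of "(\<sigma> x, \<tau> y)" t] t inv by simp
    then show "cond p (\<sigma> x) (\<tau> y) = cond p x y" by (simp add: ratio)
  qed
qed

end
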